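(* Let $n,d$ be positive integers. If $G$ is a graph with $n$ vertices and $\frac{nd}{2}-1$ edges, then the number of closed walks of length four in $G$ is at least $n(2d^2-d)-8d+2$.
   Context: All graphs are finite, simple and undirected. A closed walk of length four is a sequence of vertices $v_0v_1v_2v_3v_4$ with $v_4=v_0$ and $v_{i}v_{i+1}$ an edge for each $0\le i\le 3$. *)

theory Defs
  imports Main
begin

definition simple_graph :: "'a set \<Rightarrow> 'a set set \<Rightarrow> bool" where
  "simple_graph V E \<longleftrightarrow> finite V \<and> (\<forall>e\<in>E. \<exists>u v. u \<in> V \<and> v \<in> V \<and> u \<noteq> v \<and> e = {u, v})"

definition closed_walks4 :: "'a set set \<Rightarrow> ('a \<times> 'a \<times> 'a \<times> 'a) set" where
  "closed_walks4 E = {(v0, v1, v2, v3). {v0, v1} \<in> E \<and> {v1, v2} \<in> E \<and> {v2, v3} \<in> E \<and> {v3, v0} \<in> E}"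

end

theory Submission
  imports Defs
begin

(* Two neighbours a, b of a vertex v give the closed walk v a v b, and also the closed walk
   a v b v, which is different from all walks of the first kind as long as a \<noteq> b.  Hence there
   are at least 2 \<Sum> deg(v)^2 - 2|E| closed walks of length four, and the bound follows from
   \<Sum> (deg(v) - d)^2 \<ge> 0 together with the handshake identity \<Sum> deg(v) = 2|E| = nd - 2. *)

definition neighbours :: "'a set set \<Rightarrow> 'a \<Rightarrow> 'a set" where
  "neighbours E v = {u. {v, u} \<in> E}"

definition degree :: "'a set set \<Rightarrow> 'a \<Rightarrow> nat" where
  "degree E v = card (neighbours E v)"

lemma simple_graph_edgeD:
  assumes "simple_graph V E" "{a, b} \<in> E"
  shows "a \<in> V" "b \<in> V" "a \<noteq> b"
proof -
  from assms obtain u v where "u \<in> V" "v \<in> V" "u \<noteq> v" "{a, b} = {u, v}"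
    unfolding simple_graph_def by blast
  then show "a \<in> V" "b \<in> V" "a \<noteq> b" by (auto simp: doubleton_eq_iff)
qed

lemma simple_graph_finite_vertices:
  assumes "simple_graph V E"
  shows "finite V"
  using assms unfolding simple_graph_def by (rule conjunct1)

lemma simple_graph_finite_edges:
  assumes "simple_graph V E"
  shows "finite E"
proof -
  have "E \<subseteq> Pow V"
    using assms unfolding simple_graph_def by fastforce
  then show ?thesis
    using simple_graph_finite_vertices[OF assms] by (meson finite_Pow_iff finite_subset)
qed

lemma neighbours_subset:
  assumes "simple_graph V E"
  shows "neighbours E v \<subseteq> V"
  using simple_graph_edgeD[OF assms] unfolding neighbours_def by blast

lemma finite_neighbours:
  assumes "simple_graph V E"
  shows "finite (neighbours E v)"
  by (rule finite_subset[OF neighbours_subset[OF assms] simple_graph_finite_vertices[OF assms]])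

lemma sum_degree:
  assumes G: "simple_graph V E"
  shows "(\<Sum>v\<in>V. degree E v) = 2 * card E"
proof -
  have arcs: "(SIGMA v:V. neighbours E v) = (\<Union>e\<in>E. {(x, y). {x, y} = e})"
    using simple_graph_edgeD(1)[OF G] unfolding neighbours_def by blast
  have two_arcs: "card {(x, y). {x, y} = e} = 2" if "e \<in> E" for e
  proof -
    from that G obtain u v where "u \<noteq> v" "e = {u, v}"
      unfolding simple_graph_def by blast
    then have "{(x, y). {x, y} = e} = {(u, v), (v, u)}" by (auto simp: doubleton_eq_iff)
    then show ?thesis using \<open>u \<noteq> v\<close> by simp
  qed
  have finite_arcs: "finite {(x, y). {x, y} = e}" if "e \<in> E" for e
    using two_arcs[OF that] by (intro card_ge_0_finite) simp
  have "(\<Sum>v\<in>V. degree E v) = card (SIGMA v:V. neighbours E v)"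
    using simple_graph_finite_vertices[OF G] finite_neighbours[OF G] unfolding degree_def
    by (simp add: card_SigmaI)
  also have "\<dots> = (\<Sum>e\<in>E. card {(x, y). {x, y} = e})"
    unfolding arcs using simple_graph_finite_edges[OF G] finite_arcs
    by (intro card_UN_disjoint) auto
  also have "\<dots> = 2 * card E"
    using two_arcs by simp
  finally show ?thesis .
qed

lemma card_off_diagonal:
  assumes "finite A"
  shows "card {(a, b) \<in> A \<times> A. a \<noteq> b} + card A = card A ^ 2"
proof -
  have "card A ^ 2 = card (A \<times> A)"
    by (simp add: card_cartesian_product power2_eq_square)
  also have "A \<times> A = {(a, b) \<in> A \<times> A. a \<noteq> b} \<union> (\<lambda>a. (a, a)) ` A"
    by auto
  also have "card \<dots> = card {(a, b) \<in> A \<times> A. a \<noteq> b} + card ((\<lambda>a. (a, a)) ` A)"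
    using assms by (intro card_Un_disjoint) (auto intro: finite_subset[OF _ finite_cartesian_product[OF assms assms]])
  also have "card ((\<lambda>a. (a, a)) ` A) = card A"
    by (rule card_image) (auto simp: inj_on_def)
  finally show ?thesis
    by simp
qed

lemma card_closed_walks4_ge:
  assumes G: "simple_graph V E"
  shows "(\<Sum>v\<in>V. card (neighbours E v \<times> neighbours E v))
      + (\<Sum>v\<in>V. card {(a, b) \<in> neighbours E v \<times> neighbours E v. a \<noteq> b})
    \<le> card (closed_walks4 E)"
proof -
  let ?N = "neighbours E"
  define S1 where "S1 = (SIGMA v:V. ?N v \<times> ?N v)"
  define S2 where "S2 = (SIGMA v:V. {(a, b) \<in> ?N v \<times> ?N v. a \<noteq> b})"
  define f where "f = (\<lambda>(v::'a, a::'a, b::'a). (v, a, v, b))"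
  define g where "g = (\<lambda>(v::'a, a::'a, b::'a). (a, v, b, v))"
  have fV: "finite V"
    using simple_graph_finite_vertices[OF G] .
  have fN: "finite (?N v)" for v
    using finite_neighbours[OF G] .
  have fOff: "finite {(a, b) \<in> ?N v \<times> ?N v. a \<noteq> b}" for v
    by (rule finite_subset[OF _ finite_cartesian_product[OF fN fN]]) auto
  have fS1: "finite S1" and fS2: "finite S2"
    unfolding S1_def S2_def using fV fN fOff by auto
  have "closed_walks4 E \<subseteq> V \<times> V \<times> V \<times> V"
    unfolding closed_walks4_def using simple_graph_edgeD[OF G] by auto
  then have fW: "finite (closed_walks4 E)"
    using fV finite_subset by blast
  have walks: "f ` S1 \<union> g ` S2 \<subseteq> closed_walks4 E"
    unfolding S1_def S2_def f_def g_def closed_walks4_def neighbours_def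
    by (auto simp: insert_commute)
  have disjoint: "f ` S1 \<inter> g ` S2 = {}"
    unfolding S1_def S2_def f_def g_def by auto
  have "inj_on f S1" "inj_on g S2"
    unfolding f_def g_def inj_on_def by auto
  then have "card S1 + card S2 = card (f ` S1) + card (g ` S2)"
    by (simp add: card_image)
  also have "\<dots> = card (f ` S1 \<union> g ` S2)"
    using fS1 fS2 disjoint by (intro card_Un_disjoint [symmetric]) auto
  also have "\<dots> \<le> card (closed_walks4 E)"
    using card_mono[OF fW walks] .
  finally show ?thesis
    unfolding S1_def S2_def using fV fN fOff by (simp add: card_SigmaI)
qed

lemma sum_degree_squared_le_closed_walks4:
  assumes G: "simple_graph V E"
  shows "2 * (\<Sum>v\<in>V. degree E v ^ 2) \<le> card (closed_walks4 E) + 2 * card E"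
proof -
  have "card (neighbours E v \<times> neighbours E v) = degree E v ^ 2" for v
    by (simp add: degree_def card_cartesian_product power2_eq_square)
  moreover have "card {(a, b) \<in> neighbours E v \<times> neighbours E v. a \<noteq> b} + degree E v = degree E v ^ 2" for v
    unfolding degree_def using card_off_diagonal[OF finite_neighbours[OF G]] .
  ultimately have "2 * (\<Sum>v\<in>V. degree E v ^ 2)
      = (\<Sum>v\<in>V. card (neighbours E v \<times> neighbours E v))
        + (\<Sum>v\<in>V. card {(a, b) \<in> neighbours E v \<times> neighbours E v. a \<noteq> b})
        + (\<Sum>v\<in>V. degree E v)"
    by (simp add: mult_2 add.assoc flip: sum.distrib)
  then show ?thesis
    using card_closed_walks4_ge[OF G] sum_degree[OF G] by linarith
qed

lemma sum_power2_ge_linear: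
  fixes x :: "'b \<Rightarrow> 'c::linordered_idom"
  assumes "finite A"
  shows "2 * c * (\<Sum>v\<in>A. x v) - of_nat (card A) * c ^ 2 \<le> (\<Sum>v\<in>A. x v ^ 2)"
proof -
  have "0 \<le> (\<Sum>v\<in>A. (x v - c) ^ 2)"
    by (simp add: sum_nonneg)
  also have "\<dots> = (\<Sum>v\<in>A. x v ^ 2 - 2 * c * x v + c ^ 2)"
    by (simp add: power2_diff algebra_simps)
  also have "\<dots> = (\<Sum>v\<in>A. x v ^ 2) - 2 * c * (\<Sum>v\<in>A. x v) + of_nat (card A) * c ^ 2"
    by (simp add: sum.distrib sum_subtractf sum_distrib_left)
  finally show ?thesis by simp
qed

theorem corollary3p2:
  fixes V :: "'a set" and E :: "'a set set" and n d :: nat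
  assumes "simple_graph V E"
    and "card V = n"
    and "n > 0" and "d > 0"
    and "2 * int (card E) = int n * int d - 2"
  shows "int (card (closed_walks4 E)) \<ge> int n * (2 * int d ^ 2 - int d) - 8 * int d + 2"
proof -
  let ?deg = "\<lambda>v. int (degree E v)"
  let ?Q = "\<Sum>v\<in>V. ?deg v ^ 2"
  have degrees: "(\<Sum>v\<in>V. ?deg v) = int n * int d - 2"
    using sum_degree[OF assms(1)] assms(5) by (metis of_nat_sum of_nat_mult of_nat_numeral)
  have walks: "2 * ?Q \<le> int (card (closed_walks4 E)) + (int n * int d - 2)"
    using sum_degree_squared_le_closed_walks4[OF assms(1)] assms(5)
    by (simp flip: of_nat_sum of_nat_power)
  have "2 * int d * (int n * int d - 2) - int n * int d ^ 2 \<le> ?Q"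
    using sum_power2_ge_linear[OF simple_graph_finite_vertices[OF assms(1)], where x = ?deg and c = "int d"]
      assms(2) degrees
    by simp
  then have squares: "int n * int d ^ 2 - 4 * int d \<le> ?Q"
    by (simp add: right_diff_distrib power2_eq_square mult_ac)
  have "int n * (2 * int d ^ 2 - int d) - 8 * int d + 2
      = 2 * (int n * int d ^ 2 - 4 * int d) - (int n * int d - 2)"
    by (simp add: right_diff_distrib)
  also have "\<dots> \<le> 2 * ?Q - (int n * int d - 2)"
    using squares by (intro diff_right_mono) simp
  also have "\<dots> \<le> int (card (closed_walks4 E))"
    using walks by (simp only: diff_le_eq)
  finally show ?thesis .
qed

end
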